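(* Let $\Gamma$ be an open graph with a fixed linear ordering of its terminal edges and weights $\mathbf A=(A_e)$, and let $S_\Gamma(\mathbf A,\boldsymbol\xi)$ be its generating partition function. Let $i$ and $j$ be terminal edges with $j$ immediately following $i$ in the ordering, with weights $A_i,A_j$, and let $\Gamma'$ be the graph obtained by identifying the terminal vertices of $i$ and $j$ and erasing the resulting two-valent vertex, so that $i,j$ become a single edge $e$ with weight $A_e=A_iA_j$. Let $\mathbf A'$ be the resulting weights and $\boldsymbol\xi'$ be $\boldsymbol\xi$ with $\xi_i,\xi_j$ removed. Then $$S_{\Gamma'}(\mathbf A',\boldsymbol\xi')=\int S_\Gamma(\mathbf A,\boldsymbol\xi)\,e^{\xi_i\xi_j}\,d\xi_j\,d\xi_i .$$
   Context: An open graph is a graph with some terminal edges, each having a univalent terminal vertex; other vertices are internal. A dimer configuration on an open graph is a set of edges containing every internal vertex exactly once (no condition on terminal vertices). For a subset $T$ of the set $\mathcal T_\Gamma$ of terminal edges, $S_\Gamma(\mathbf A,T)=\sum_D\prod_{e\in D}A_e$, summed over dimer configurations $D$ in which exactly the terminal edges of $T$ are occupied. With odd (Grassmann) variables $\xi_t$, $t\in\mathcal T_\Gamma$, the generating partition function is $S_\Gamma(\mathbf A,\boldsymbol\xi)=\sum_{T\subset\mathcal T_\Gamma}S_\Gamma(\mathbf A,T)\prod_{t\in T}\xi_t$, products taken in the fixed order. Berezin integration with $\int\xi_i\xi_j\,d\xi_j\,d\xi_i=1$. *)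

theory Defs
  imports Main
begin

text \<open>An open graph is given by a vertex set V, an edge set E, an endpoint map
  ends (each edge e has the two endpoints fst (ends e) and snd (ends e); loops and
  multiple edges are allowed), and a set Term of terminal edges.  For a terminal
  edge t, its terminal vertex is snd (ends t), which must be univalent.\<close>

definition inc :: "('e \<Rightarrow> 'v \<times> 'v) \<Rightarrow> 'e \<Rightarrow> 'v \<Rightarrow> nat" where
  "inc ends e v = (if fst (ends e) = v then 1 else 0) + (if snd (ends e) = v then 1 else 0)"

definition deg :: "'e set \<Rightarrow> ('e \<Rightarrow> 'v \<times> 'v) \<Rightarrow> 'v \<Rightarrow> nat" where
  "deg E ends v = (\<Sum>e\<in>E. inc ends e v)"

definition term_vertices :: "('e \<Rightarrow> 'v \<times> 'v) \<Rightarrow> 'e set \<Rightarrow> 'v set" where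
  "term_vertices ends Term = (\<lambda>t. snd (ends t)) ` Term"

definition open_graph :: "'v set \<Rightarrow> 'e set \<Rightarrow> ('e \<Rightarrow> 'v \<times> 'v) \<Rightarrow> 'e set \<Rightarrow> bool" where
  "open_graph V E ends Term \<longleftrightarrow>
     finite V \<and> finite E \<and>
     (\<forall>e\<in>E. fst (ends e) \<in> V \<and> snd (ends e) \<in> V) \<and>
     Term \<subseteq> E \<and>
     (\<forall>t\<in>Term. deg E ends (snd (ends t)) = 1)"

text \<open>A dimer configuration: a set of edges covering every internal vertex exactly once
  (incidences counted with multiplicity); no condition at terminal vertices.\<close>

definition dimer_config :: "'v set \<Rightarrow> 'e set \<Rightarrow> ('e \<Rightarrow> 'v \<times> 'v) \<Rightarrow> 'e set \<Rightarrow> 'e set \<Rightarrow> bool" where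
  "dimer_config V E ends Term D \<longleftrightarrow>
     D \<subseteq> E \<and> (\<forall>v \<in> V - term_vertices ends Term. (\<Sum>e\<in>D. inc ends e v) = 1)"

definition S_part :: "'v set \<Rightarrow> 'e set \<Rightarrow> ('e \<Rightarrow> 'v \<times> 'v) \<Rightarrow> 'e set \<Rightarrow> ('e \<Rightarrow> 'a::comm_ring_1)
     \<Rightarrow> 'e set \<Rightarrow> 'a" where
  "S_part V E ends Term A T =
     (\<Sum>D\<in>{D. dimer_config V E ends Term D \<and> D \<inter> Term = T}. \<Prod>e\<in>D. A e)"

text \<open>An element of the Grassmann algebra with odd generators xi_t (t of a linearly ordered
  type 'e) is represented by its coefficient function: F T is the coefficient of the
  ordered monomial xi_{t1} ... xi_{tk}, t1 < ... < tk, T = {t1,...,tk}.\<close>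

type_synonym ('e, 'a) grass = "'e set \<Rightarrow> 'a"

definition gsign :: "'e::linorder set \<Rightarrow> 'e set \<Rightarrow> 'a::comm_ring_1" where
  "gsign S T = (-1) ^ card {(s, t). s \<in> S \<and> t \<in> T \<and> t < s}"

definition gmul :: "('e::linorder, 'a::comm_ring_1) grass \<Rightarrow> ('e, 'a) grass \<Rightarrow> ('e, 'a) grass" where
  "gmul F G = (\<lambda>U. \<Sum>S\<in>Pow U. gsign S (U - S) * F S * G (U - S))"

definition gadd :: "('e, 'a::comm_ring_1) grass \<Rightarrow> ('e, 'a) grass \<Rightarrow> ('e, 'a) grass" where
  "gadd F G = (\<lambda>U. F U + G U)"

definition gone :: "('e, 'a::comm_ring_1) grass" where
  "gone = (\<lambda>U. if U = {} then 1 else 0)"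

definition gvar :: "'e \<Rightarrow> ('e, 'a::comm_ring_1) grass" where
  "gvar x = (\<lambda>U. if U = {x} then 1 else 0)"

text \<open>exp(xi_i xi_j) = 1 + xi_i xi_j, since (xi_i xi_j)^2 = 0.\<close>

definition gexp_pair :: "'e::linorder \<Rightarrow> 'e \<Rightarrow> ('e, 'a::comm_ring_1) grass" where
  "gexp_pair i j = gadd gone (gmul (gvar i) (gvar j))"

text \<open>Berezin integration in one variable x, normalised by integral of xi_x d xi_x = 1,
  acting from the right:  integral xi_W dxi_x = (-1)^#{t in W. t > x} xi_{W - {x}} if x in W, else 0.\<close>

definition berezin :: "'e::linorder \<Rightarrow> ('e, 'a::comm_ring_1) grass \<Rightarrow> ('e, 'a) grass" where
  "berezin x F = (\<lambda>U. if x \<in> U then 0 else (-1) ^ card {t\<in>U. x < t} * F (insert x U))"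

text \<open>Iterated integral  \<integral> F dxi_j dxi_i  (inner integration over xi_j); with this
  convention \<integral> xi_i xi_j dxi_j dxi_i = 1.\<close>

definition berezin2 :: "('e::linorder, 'a::comm_ring_1) grass \<Rightarrow> 'e \<Rightarrow> 'e \<Rightarrow> ('e, 'a) grass" where
  "berezin2 F j i = berezin i (berezin j F)"

definition S_gen :: "'v set \<Rightarrow> 'e::linorder set \<Rightarrow> ('e \<Rightarrow> 'v \<times> 'v) \<Rightarrow> 'e set
     \<Rightarrow> ('e \<Rightarrow> 'a::comm_ring_1) \<Rightarrow> ('e, 'a) grass" where
  "S_gen V E ends Term A = (\<lambda>T. if T \<subseteq> Term then S_part V E ends Term A T else 0)"

end

theory Submission
  imports Defs
begin

text \<open>Since \<open>e^{\<xi>\<^sub>i \<xi>\<^sub>j} = 1 + \<xi>\<^sub>i \<xi>\<^sub>j\<close>, integrating out \<open>\<xi>\<^sub>j\<close> and \<open>\<xi>\<^sub>i\<close> sends the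
  coefficient of a monomial \<open>\<xi>\<^sub>U\<close> (with \<open>i, j \<notin> U\<close>) to the sum of the coefficients
  of \<open>\<xi>\<^sub>U\<close> and of \<open>\<xi>\<^sub>U \<xi>\<^sub>i \<xi>\<^sub>j\<close>; all reordering signs cancel because i and j are
  adjacent.  On the graph side, the dimer configurations of the fused graph avoiding
  the new edge e are those of the original graph avoiding i and j, and those
  containing e correspond bijectively, via \<open>e \<mapsto> {i, j}\<close>, to those containing both
  i and j, with matching weights \<open>A\<^sub>e = A\<^sub>i A\<^sub>j\<close>.\<close>

lemma gmul_gvar_gvar:
  fixes i j :: "'e::linorder"
  assumes "i < j"
  shows "(gmul (gvar i) (gvar j) :: ('e, 'a::comm_ring_1) grass) X = (if X = {i, j} then 1 else 0)"
proof -
  have "gsign S (X - S) * gvar i S * gvar j (X - S) = (if S = {i} \<and> X = {i, j} then (1::'a) else 0)"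
    if "S \<subseteq> X" for S
  proof (cases "S = {i} \<and> X - S = {j}")
    case True
    have "{(s, t). s \<in> {i} \<and> t \<in> {j} \<and> t < s} = {}"
      using assms by auto
    then have "gsign {i} {j} = (1::'a)"
      unfolding gsign_def by (simp only: card.empty power_0)
    moreover have "X = {i, j}"
      using True that by auto
    ultimately show ?thesis
      using True by (auto simp: gvar_def)
  next
    case False
    moreover have "X = {i, j} \<Longrightarrow> S = {i} \<Longrightarrow> X - S = {j}"
      using assms by auto
    ultimately show ?thesis
      by (auto simp: gvar_def)
  qed
  then have "gmul (gvar i) (gvar j) X = (\<Sum>S\<in>Pow X. if S = {i} \<and> X = {i, j} then (1::'a) else 0)"
    unfolding gmul_def by (intro sum.cong) auto
  then show ?thesis by simp
qed

lemma gexp_pair_apply: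
  fixes i j :: "'e::linorder"
  assumes "i < j"
  shows "(gexp_pair i j :: ('e, 'a::comm_ring_1) grass) X
           = (if X = {} then 1 else 0) + (if X = {i, j} then 1 else 0)"
  by (simp add: gmul_gvar_gvar[OF assms] gexp_pair_def gadd_def gone_def)

lemma gmul_infinite:
  assumes "infinite U"
  shows "gmul F G U = 0"
  using assms by (simp add: gmul_def)

lemma gmul_gexp_pair_insert2:
  fixes i j :: "'e::linorder" and F :: "('e, 'a::comm_ring_1) grass"
  assumes "i < j" "finite U" "i \<notin> U" "j \<notin> U"
  shows "gmul F (gexp_pair i j) (insert j (insert i U))
           = F (insert j (insert i U)) + gsign U {i, j} * F U"
proof -
  let ?W = "insert j (insert i U)"
  have "gmul F (gexp_pair i j) ?W
        = (\<Sum>S\<in>Pow ?W. (if S = ?W then F ?W else 0) + (if S = U then gsign U {i, j} * F U else 0))"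
    unfolding gmul_def
  proof (rule sum.cong)
    fix S assume S: "S \<in> Pow ?W"
    have "?W - S = {} \<longleftrightarrow> S = ?W" "?W - S = {i, j} \<longleftrightarrow> S = U" "?W - U = {i, j}" "?W \<noteq> U"
      using S assms by auto
    moreover have "gsign ?W {} = (1::'a)"
      by (simp add: gsign_def)
    ultimately show "gsign S (?W - S) * F S * gexp_pair i j (?W - S)
        = (if S = ?W then F ?W else 0) + (if S = U then gsign U {i, j} * F U else 0)"
      using assms(1) by (simp add: gexp_pair_apply)
  qed simp
  also have "\<dots> = F ?W + gsign U {i, j} * F U"
    using assms by (simp add: sum.distrib subset_insertI2)
  finally show ?thesis .
qed

text \<open>Every element of U above j is also above i, so the inversions come in pairs.\<close>

lemma gsign_adjacent_pair:
  fixes i j :: "'e::linorder"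
  assumes "i < j" "finite U" "j \<notin> U" "\<forall>t\<in>U. \<not> (i < t \<and> t < j)"
  shows "(gsign U {i, j} :: 'a::comm_ring_1) = 1"
proof -
  let ?C = "{s\<in>U. i < s}"
  have "{(s, t). s \<in> U \<and> t \<in> {i, j} \<and> t < s} = ?C \<times> {i} \<union> ?C \<times> {j}"
    using assms by auto (metis neq_iff)+
  moreover have "card (?C \<times> {i} \<union> ?C \<times> {j}) = 2 * card ?C"
    using assms by (subst card_Un_disjoint) (auto simp: card_cartesian_product)
  ultimately show ?thesis
    by (simp add: gsign_def power_mult)
qed

lemma berezin2_apply:
  fixes i j :: "'e::linorder"
  assumes "i \<noteq> j"
  shows "berezin2 G j i U
           = (if i \<in> U \<or> j \<in> U then 0
              else (-1) ^ (card {t\<in>U. i < t} + card {t\<in>insert i U. j < t}) * G (insert j (insert i U)))"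
  using assms by (simp add: berezin2_def berezin_def power_add mult.assoc)

lemma berezin2_adjacent:
  fixes i j :: "'e::linorder"
  assumes "i < j" "i \<notin> U" "j \<notin> U" "\<forall>t\<in>U. \<not> (i < t \<and> t < j)"
  shows "berezin2 G j i U = G (insert j (insert i U))"
proof -
  have "{t\<in>insert i U. j < t} = {t\<in>U. i < t}"
    using assms by auto (metis neq_iff)
  then show ?thesis
    using assms by (simp add: berezin2_apply flip: mult_2 add: power_mult)
qed

locale terminal_fusion =
  fixes V :: "'v set" and E :: "'e set" and ends :: "'e \<Rightarrow> 'v \<times> 'v"
    and Term :: "'e set" and i j e :: 'e
  assumes finite_edges: "finite E"
    and terminals_subset: "Term \<subseteq> E"
    and i_terminal: "i \<in> Term" and j_terminal: "j \<in> Term" and i_neq_j: "i \<noteq> j"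
    and fresh_edge: "e \<notin> E - {i, j}"
begin

abbreviation "V' \<equiv> V - {snd (ends i), snd (ends j)}"
abbreviation "E' \<equiv> (E - {i, j}) \<union> {e}"
abbreviation "ends' \<equiv> ends(e := (fst (ends i), fst (ends j)))"
abbreviation "Term' \<equiv> Term - {i, j}"

lemma fresh_edge_not_terminal: "e \<notin> Term'"
  using fresh_edge terminals_subset by auto

lemma internal_vertices_fused:
  "V' - term_vertices ends' Term' = V - term_vertices ends Term"
proof -
  have "term_vertices ends' Term' = term_vertices ends Term'"
    unfolding term_vertices_def using fresh_edge_not_terminal by (intro image_cong) auto
  moreover have "term_vertices ends Term = {snd (ends i), snd (ends j)} \<union> term_vertices ends Term'"
    unfolding term_vertices_def using i_terminal j_terminal by auto
  ultimately show ?thesis by auto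
qed

lemma sum_inc_fused_avoiding:
  "e \<notin> D \<Longrightarrow> (\<Sum>x\<in>D. inc ends' x v) = (\<Sum>x\<in>D. inc ends x v)"
  by (intro sum.cong) (auto simp: inc_def)

text \<open>The terminal ends of i and j are not internal, so only their other ends count.\<close>

lemma sum_inc_fused:
  assumes "finite R" "e \<notin> R" "i \<notin> R" "j \<notin> R" "v \<in> V - term_vertices ends Term"
  shows "(\<Sum>x\<in>insert e R. inc ends' x v) = (\<Sum>x\<in>insert i (insert j R). inc ends x v)"
proof -
  have "snd (ends i) \<noteq> v" "snd (ends j) \<noteq> v"
    using assms(5) i_terminal j_terminal unfolding term_vertices_def by auto
  then have "inc ends' e v = inc ends i v + inc ends j v"
    by (auto simp: inc_def)
  then show ?thesis
    using assms i_neq_j sum_inc_fused_avoiding[of R v] by simp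
qed

lemma dimer_config_fused_avoiding:
  assumes "e \<notin> D"
  shows "dimer_config V' E' ends' Term' D \<longleftrightarrow> dimer_config V E ends Term D \<and> i \<notin> D \<and> j \<notin> D"
  using assms sum_inc_fused_avoiding[OF assms]
  unfolding dimer_config_def internal_vertices_fused by auto

lemma dimer_config_fused_edge:
  assumes "finite R" "e \<notin> R" "i \<notin> R" "j \<notin> R"
  shows "dimer_config V' E' ends' Term' (insert e R)
           \<longleftrightarrow> dimer_config V E ends Term (insert i (insert j R))"
  using assms sum_inc_fused[OF assms] i_terminal j_terminal terminals_subset
  unfolding dimer_config_def internal_vertices_fused by auto

lemma prod_fused_edge:
  fixes A :: "'e \<Rightarrow> 'a::comm_ring_1"
  assumes "finite R" "e \<notin> R" "i \<notin> R" "j \<notin> R"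
  shows "(\<Prod>x\<in>insert e R. (A(e := A i * A j)) x) = (\<Prod>x\<in>insert i (insert j R). A x)"
proof -
  have "(\<Prod>x\<in>R. (A(e := A i * A j)) x) = (\<Prod>x\<in>R. A x)"
    using assms(2) by (intro prod.cong) auto
  then show ?thesis
    using assms i_neq_j by (simp add: mult.assoc)
qed

lemma S_part_fused:
  fixes A :: "'e \<Rightarrow> 'a::comm_ring_1"
  assumes U: "U \<subseteq> Term'"
  shows "S_part V' E' ends' Term' (A(e := A i * A j)) U
           = S_part V E ends Term A U + S_part V E ends Term A (insert j (insert i U))"
proof -
  let ?A' = "A(e := A i * A j)"
  let ?X = "{D. dimer_config V' E' ends' Term' D \<and> D \<inter> Term' = U}"
  let ?Y = "\<lambda>T. {D. dimer_config V E ends Term D \<and> D \<inter> Term = T}"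
  have finite_X: "finite ?X"
    by (rule finite_subset[of _ "Pow E'"]) (auto simp: dimer_config_def finite_edges)
  have "S_part V' E' ends' Term' ?A' U
        = (\<Sum>D\<in>{D\<in>?X. e \<in> D} \<union> {D\<in>?X. e \<notin> D}. \<Prod>x\<in>D. ?A' x)"
    unfolding S_part_def by (rule sum.cong) auto
  also have "\<dots> = (\<Sum>D\<in>{D\<in>?X. e \<in> D}. \<Prod>x\<in>D. ?A' x) + (\<Sum>D\<in>{D\<in>?X. e \<notin> D}. \<Prod>x\<in>D. ?A' x)"
    using finite_X by (intro sum.union_disjoint) (auto intro: finite_subset[OF _ finite_X])
  also have "(\<Sum>D\<in>{D\<in>?X. e \<notin> D}. \<Prod>x\<in>D. ?A' x) = S_part V E ends Term A U"
    unfolding S_part_def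
  proof (rule sum.cong)
    show "{D\<in>?X. e \<notin> D} = ?Y U"
    proof (intro set_eqI iffI)
      fix D assume D: "D \<in> {D\<in>?X. e \<notin> D}"
      then have "dimer_config V E ends Term D" "i \<notin> D" "j \<notin> D"
        using dimer_config_fused_avoiding by blast+
      then show "D \<in> ?Y U"
        using D by auto
    next
      fix D assume D: "D \<in> ?Y U"
      then have "i \<notin> D" "j \<notin> D"
        using U i_terminal j_terminal by auto
      moreover have "e \<notin> D"
        using D calculation fresh_edge by (auto simp: dimer_config_def)
      ultimately have "dimer_config V' E' ends' Term' D"
        using D dimer_config_fused_avoiding by blast
      then show "D \<in> {D\<in>?X. e \<notin> D}"
        using D \<open>e \<notin> D\<close> \<open>i \<notin> D\<close> \<open>j \<notin> D\<close> by auto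
    qed
  next
    fix D assume "D \<in> ?Y U"
    then have "e \<notin> D"
      using U i_terminal j_terminal fresh_edge by (auto simp: dimer_config_def)
    then show "(\<Prod>x\<in>D. ?A' x) = (\<Prod>x\<in>D. A x)"
      by (intro prod.cong) auto
  qed
  also have "(\<Sum>D\<in>{D\<in>?X. e \<in> D}. \<Prod>x\<in>D. ?A' x) = S_part V E ends Term A (insert j (insert i U))"
    unfolding S_part_def
  proof (rule sum.reindex_bij_witness[where i="\<lambda>D. insert e (D - {i, j})" and j="\<lambda>D. insert i (insert j (D - {e}))"])
    fix D assume D: "D \<in> {D\<in>?X. e \<in> D}"
    let ?R = "D - {e}"
    have R: "finite ?R" "e \<notin> ?R" "i \<notin> ?R" "j \<notin> ?R" and D_eq: "D = insert e ?R"
      using D finite_edges by (auto simp: dimer_config_def intro: finite_subset)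
    show "insert e (insert i (insert j ?R) - {i, j}) = D"
      using R D_eq by auto
    show "insert i (insert j ?R) \<in> ?Y (insert j (insert i U))"
      using D D_eq R dimer_config_fused_edge[OF R] i_terminal j_terminal fresh_edge_not_terminal
      by auto
    show "(\<Prod>x\<in>insert i (insert j ?R). A x) = (\<Prod>x\<in>D. ?A' x)"
      using prod_fused_edge[OF R, of A] D_eq by simp
  next
    fix D assume D: "D \<in> ?Y (insert j (insert i U))"
    let ?R = "D - {i, j}"
    have R: "finite ?R" "e \<notin> ?R" "i \<notin> ?R" "j \<notin> ?R" and D_eq: "D = insert i (insert j ?R)"
      using D finite_edges fresh_edge by (auto simp: dimer_config_def intro: finite_subset)
    show "insert i (insert j (insert e ?R - {e})) = D"
      using R D_eq by auto
    show "insert e ?R \<in> {D\<in>?X. e \<in> D}"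
      using D D_eq R dimer_config_fused_edge[OF R] U fresh_edge_not_terminal
      by auto
  qed
  finally show ?thesis
    by (simp only: add.commute)
qed

end

lemma berezin2_gmul_gexp_pair_adjacent:
  fixes i j :: "'e::linorder" and F :: "('e, 'a::comm_ring_1) grass"
  assumes "i < j" "finite U" "i \<notin> U" "j \<notin> U" "\<forall>t\<in>U. \<not> (i < t \<and> t < j)"
  shows "berezin2 (gmul F (gexp_pair i j)) j i U = F U + F (insert j (insert i U))"
proof -
  have sign: "gsign U {i, j} = (1::'a)"
    using assms by (intro gsign_adjacent_pair) auto
  have "berezin2 (gmul F (gexp_pair i j)) j i U = gmul F (gexp_pair i j) (insert j (insert i U))"
    using assms by (intro berezin2_adjacent) auto
  also have "\<dots> = F (insert j (insert i U)) + F U"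
    using gmul_gexp_pair_insert2[OF assms(1-4), of F] sign by simp
  finally show ?thesis
    by (simp only: add.commute)
qed

lemma berezin2_gmul_gexp_pair_outside:
  fixes i j :: "'e::linorder" and F :: "('e, 'a::comm_ring_1) grass"
  assumes "i < j" "i \<in> T" "j \<in> T" "\<not> U \<subseteq> T - {i, j}"
    and supp: "\<And>X. \<not> X \<subseteq> T \<Longrightarrow> F X = 0"
  shows "berezin2 (gmul F (gexp_pair i j)) j i U = 0"
proof (cases "i \<in> U \<or> j \<in> U")
  case True
  then show ?thesis
    using assms(1) by (simp add: berezin2_apply)
next
  case False
  let ?W = "insert j (insert i U)"
  have "F U = 0" "F ?W = 0"
    using False assms(4) by (auto intro!: supp)
  then have "gmul F (gexp_pair i j) ?W = 0"
  proof (cases "finite U")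
    case True
    then show ?thesis
      using False \<open>F U = 0\<close> \<open>F ?W = 0\<close> gmul_gexp_pair_insert2[OF assms(1) True, of F] by simp
  qed (simp add: gmul_infinite)
  then show ?thesis
    using assms(1) by (simp add: berezin2_apply)
qed

theorem lemma1:
  fixes V :: "'v set" and E :: "'e::linorder set" and ends :: "'e \<Rightarrow> 'v \<times> 'v"
    and Term :: "'e set" and A :: "'e \<Rightarrow> 'a::comm_ring_1" and i j e :: 'e
  assumes "open_graph V E ends Term"
    and "i \<in> Term" and "j \<in> Term" and "i < j"
    and "\<not> (\<exists>t\<in>Term. i < t \<and> t < j)"
    and "e \<notin> E - {i, j}"
  shows "S_gen (V - {snd (ends i), snd (ends j)}) ((E - {i, j}) \<union> {e})
            (ends(e := (fst (ends i), fst (ends j)))) (Term - {i, j}) (A(e := A i * A j))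
         = berezin2 (gmul (S_gen V E ends Term A) (gexp_pair i j)) j i"
proof
  fix U
  interpret terminal_fusion V E ends Term i j e
    using assms by unfold_locales (auto simp: open_graph_def)
  show "S_gen V' E' ends' Term' (A(e := A i * A j)) U
        = berezin2 (gmul (S_gen V E ends Term A) (gexp_pair i j)) j i U"
  proof (cases "U \<subseteq> Term'")
    case True
    let ?F = "S_gen V E ends Term A"
    have "U \<subseteq> Term" "insert j (insert i U) \<subseteq> Term"
      using True assms(2,3) by blast+
    then have "S_gen V' E' ends' Term' (A(e := A i * A j)) U = ?F U + ?F (insert j (insert i U))"
      using True by (simp only: S_gen_def if_True S_part_fused)
    also have "\<dots> = berezin2 (gmul ?F (gexp_pair i j)) j i U"
    proof (rule berezin2_gmul_gexp_pair_adjacent[symmetric, OF assms(4)])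
      show "finite U"
        using True finite_edges terminals_subset by (meson Diff_subset finite_subset subset_trans)
    qed (use True assms(5) in blast)+
    finally show ?thesis .
  next
    case False
    have "berezin2 (gmul (S_gen V E ends Term A) (gexp_pair i j)) j i U = 0"
      using False by (intro berezin2_gmul_gexp_pair_outside[OF assms(4,2,3)]) (auto simp: S_gen_def)
    with False show ?thesis
      by (simp add: S_gen_def)
  qed
qed

end
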